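(* Let $\Sigma=\{a,b\}$ and consider regular expressions over $\Sigma$ generated by $\beta := \varepsilon \mid a \mid b \mid (\beta+\beta) \mid (\beta\cdot\beta) \mid (\beta^\star)$. Let $\mathcal G_2$ be the grammar with start symbol $\alpha$ and productions \begin{align*} \alpha &:= \varepsilon \mid a \mid b \mid (\alpha\cdot\alpha) \mid (\alpha^\star) \mid (\alpha_P+\alpha_P),\\ \alpha_P &:= \varepsilon \mid a \mid b \mid (\alpha\cdot\alpha) \mid (\alpha_\Sigma^\star) \mid (\alpha_P+\alpha_P),\\ \alpha_\Sigma &:= \varepsilon \mid a \mid b \mid (\alpha\cdot\alpha) \mid (\alpha^\star) \mid \gamma,\\ \gamma &:= (\alpha_{ab}+\alpha_{ab}) \mid (\alpha_{ab}+a) \mid (\alpha_{ab}+b) \mid (a+\alpha_{ab}) \mid (b+\alpha_{ab}) \mid (a+a) \mid (b+b),\\ \alpha_{ab} &:= \varepsilon \mid (\alpha\cdot\alpha) \mid (\alpha_\Sigma^\star) \mid (\alpha_P+\alpha_P). \end{align*} Then a regular expression $\beta$ over $\{a,b\}$ is generated by $\mathcal G_2$ (from the start symbol $\alpha$) if and only if the pattern $(a+b)^\star$ or $(b+a)^\star$ does not occur in a union in $\beta$, i.e., $\beta$ has no subexpression of the form $(\beta_1+\beta_2)$ with $\beta_1$ or $\beta_2$ equal (syntactically) to $((a+b)^\star)$ or $((b+a)^\star)$.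
   Context: Regular expressions are treated as syntactic trees (fully parenthesized expressions); equality of expressions here means syntactic identity. *)

theory Defs
  imports Main
begin

text \<open>Regular expressions over the alphabet {a,b}, as syntax trees
  (fully parenthesized); equality is syntactic identity.\<close>
datatype re = Eps | A | B | Plus re re | Times re re | Star re

inductive alpha and alphaP and alphaS and gamma and alphaAB where
  al_eps: "alpha Eps"
| al_a: "alpha A"
| al_b: "alpha B"
| al_times: "alpha r \<Longrightarrow> alpha s \<Longrightarrow> alpha (Times r s)"
| al_star: "alpha r \<Longrightarrow> alpha (Star r)"
| al_plus: "alphaP r \<Longrightarrow> alphaP s \<Longrightarrow> alpha (Plus r s)"
| P_eps: "alphaP Eps"
| P_a: "alphaP A"
| P_b: "alphaP B"
| P_times: "alpha r \<Longrightarrow> alpha s \<Longrightarrow> alphaP (Times r s)"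
| P_star: "alphaS r \<Longrightarrow> alphaP (Star r)"
| P_plus: "alphaP r \<Longrightarrow> alphaP s \<Longrightarrow> alphaP (Plus r s)"
| S_eps: "alphaS Eps"
| S_a: "alphaS A"
| S_b: "alphaS B"
| S_times: "alpha r \<Longrightarrow> alpha s \<Longrightarrow> alphaS (Times r s)"
| S_star: "alpha r \<Longrightarrow> alphaS (Star r)"
| S_gamma: "gamma r \<Longrightarrow> alphaS r"
| g_abab: "alphaAB r \<Longrightarrow> alphaAB s \<Longrightarrow> gamma (Plus r s)"
| g_aba: "alphaAB r \<Longrightarrow> gamma (Plus r A)"
| g_abb: "alphaAB r \<Longrightarrow> gamma (Plus r B)"
| g_aab: "alphaAB s \<Longrightarrow> gamma (Plus A s)"
| g_bab: "alphaAB s \<Longrightarrow> gamma (Plus B s)"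
| g_aa: "gamma (Plus A A)"
| g_bb: "gamma (Plus B B)"
| ab_eps: "alphaAB Eps"
| ab_times: "alpha r \<Longrightarrow> alpha s \<Longrightarrow> alphaAB (Times r s)"
| ab_star: "alphaS r \<Longrightarrow> alphaAB (Star r)"
| ab_plus: "alphaP r \<Longrightarrow> alphaP s \<Longrightarrow> alphaAB (Plus r s)"

fun subexprs :: "re \<Rightarrow> re set" where
  "subexprs Eps = {Eps}"
| "subexprs A = {A}"
| "subexprs B = {B}"
| "subexprs (Plus r s) = insert (Plus r s) (subexprs r \<union> subexprs s)"
| "subexprs (Times r s) = insert (Times r s) (subexprs r \<union> subexprs s)"
| "subexprs (Star r) = insert (Star r) (subexprs r)"

definition forbidden :: "re \<Rightarrow> bool" where
  "forbidden r \<longleftrightarrow> r = Star (Plus A B) \<or> r = Star (Plus B A)"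

end

theory Submission
  imports Defs
begin

text \<open>Each nonterminal of G2 generates exactly the expressions without a forbidden summand
  that additionally satisfy a local side condition at the root: \<open>\<alpha>\<^sub>P\<close> excludes the two
  forbidden stars themselves, \<open>\<alpha>\<^sub>\<Sigma>\<close> excludes the sums \<open>a+b\<close> and \<open>b+a\<close> (so that a star of an
  \<open>\<alpha>\<^sub>\<Sigma>\<close> is never forbidden), \<open>\<alpha>\<^sub>a\<^sub>b\<close> excludes in addition the letters, and \<open>\<gamma>\<close> is the sum
  case of \<open>\<alpha>\<^sub>\<Sigma>\<close>.\<close>

fun forbidden_free :: "re \<Rightarrow> bool" where
  "forbidden_free Eps = True"
| "forbidden_free A = True"
| "forbidden_free B = True"
| "forbidden_free (Plus r s) \<longleftrightarrow>
     forbidden_free r \<and> forbidden_free s \<and> \<not> forbidden r \<and> \<not> forbidden s"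
| "forbidden_free (Times r s) \<longleftrightarrow> forbidden_free r \<and> forbidden_free s"
| "forbidden_free (Star r) \<longleftrightarrow> forbidden_free r"

lemma forbidden_free_iff_subexprs:
  "forbidden_free r \<longleftrightarrow>
    \<not> (\<exists>r1 r2. Plus r1 r2 \<in> subexprs r \<and> (forbidden r1 \<or> forbidden r2))"
  by (induction r) auto

lemma forbidden_Star_iff: "forbidden (Star r) \<longleftrightarrow> r \<in> {Plus A B, Plus B A}"
  by (auto simp: forbidden_def)

lemma not_forbidden_if_not_Star: "\<not> forbidden r" if "\<And>s. r \<noteq> Star s"
  using that by (auto simp: forbidden_def)

lemma G2_sound:
  shows "alpha r \<Longrightarrow> forbidden_free r"
    and "alphaP r \<Longrightarrow> forbidden_free r \<and> \<not> forbidden r"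
    and "alphaS r \<Longrightarrow> forbidden_free r \<and> r \<notin> {Plus A B, Plus B A}"
    and "gamma r \<Longrightarrow> forbidden_free r \<and> r \<notin> {Plus A B, Plus B A}"
    and "alphaAB r \<Longrightarrow> forbidden_free r \<and> \<not> forbidden r \<and> r \<notin> {A, B}"
  by (induction rule: alpha_alphaP_alphaS_gamma_alphaAB.inducts)
    (auto simp: forbidden_def)

lemma gamma_PlusI:
  assumes "r \<in> {A, B} \<or> alphaAB r" and "s \<in> {A, B} \<or> alphaAB s"
    and "Plus r s \<notin> {Plus A B, Plus B A}"
  shows "gamma (Plus r s)"
  using assms by (auto intro: alpha_alphaP_alphaS_gamma_alphaAB.intros)

lemma G2_complete:
  assumes "forbidden_free r"
  shows "alpha r \<and> (\<not> forbidden r \<longrightarrow> alphaP r)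
    \<and> (r \<notin> {Plus A B, Plus B A} \<longrightarrow> alphaS r)
    \<and> (\<not> forbidden r \<and> r \<notin> {A, B} \<longrightarrow> alphaAB r)"
  using assms
proof (induction r)
  case (Plus r s)
  then have "alphaP r" "alphaP s"
    and "r \<in> {A, B} \<or> alphaAB r" "s \<in> {A, B} \<or> alphaAB s"
    by auto
  then show ?case
    by (auto intro: gamma_PlusI alpha_alphaP_alphaS_gamma_alphaAB.intros
        simp: not_forbidden_if_not_Star)
next
  case (Star r)
  then show ?case
    by (auto intro: alpha_alphaP_alphaS_gamma_alphaAB.intros
        simp: forbidden_Star_iff not_forbidden_if_not_Star)
qed (auto intro: alpha_alphaP_alphaS_gamma_alphaAB.intros simp: not_forbidden_if_not_Star)

lemma alpha_iff_forbidden_free: "alpha r \<longleftrightarrow> forbidden_free r"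
  using G2_sound(1) G2_complete by blast

theorem lemma1:
  shows "alpha \<beta> \<longleftrightarrow>
    \<not> (\<exists>\<beta>1 \<beta>2. Plus \<beta>1 \<beta>2 \<in> subexprs \<beta> \<and> (forbidden \<beta>1 \<or> forbidden \<beta>2))"
  unfolding alpha_iff_forbidden_free forbidden_free_iff_subexprs ..

end
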